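(* For all $\Sigma\in\mathcal{P}(\mathit{State})$, $$\alpha^{\mathsf{v}}(\Sigma)=\bigsqcup\big\{\langle\{\langle\ell,\langle s,h|_{\mathrm{rng}(s)}\rangle\rangle\},\; h|_{\mathit{Addr}\setminus\mathrm{rng}(s)}\rangle \;\big|\; \langle\ell,\langle s,h\rangle\rangle\in\Sigma\big\},$$ where $h|_X$ denotes the restriction of $h$ to $X$ (the second component viewed as a set of pairs $\langle a,h(a)\rangle$) and $\bigsqcup$ is the join in $\mathcal{A}^{\mathsf{v}}$. Moreover, $\alpha^{\mathsf{v}}(\top)=\top$.
   Context: Setting (heap programs): $\mathit{Var}=\mathit{Var}_p\uplus\mathit{Var}_d$ are pointer/data program variables, $\mathit{Fld}=\mathit{Fld}_p\uplus\mathit{Fld}_d$ pointer/data fields, $\mathit{Addr}$ a set of addresses containing $\mathsf{null}$, $\mathit{Val}=\mathit{Addr}\uplus\mathbb{Z}$, $\mathit{Loc}$ a finite set of control locations. A stack $s:\mathit{Var}\to\mathit{Val}$ is safe if $s(\mathit{Var}_p)\subseteq\mathit{Addr}$ and $s(\mathit{Var}_d)\subseteq\mathbb{Z}$. A heap is a partial map $h:\mathit{Addr}\rightharpoonup\mathit{FldVal}$ with $\mathit{FldVal}=(\mathit{Fld}\uplus\{\mathsf{free}\})\to\mathit{Val}$; it is safe if for all $a\in\mathrm{dom}(h)$, $h(a)(\mathit{Fld}_p)\subseteq\mathit{Addr}\cap\mathrm{dom}(h)$ and $h(a)(\mathit{Fld}_d\uplus\{\mathsf{free}\})\subseteq\mathbb{Z}$;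 $\mathit{Heap}$ is the set of safe heaps. A state is $\langle\ell,\langle s,h\rangle\rangle$ with $\ell\in\mathit{Loc}$, $s$ a safe stack, $h$ a safe heap and $\mathrm{rng}(s)\cap\mathit{Addr}\subseteq\mathrm{dom}(h)$; $\mathit{State}$ is the set of states. The concrete domain is $\mathcal{C}=\mathcal{P}(\mathit{State})\cup\{\top\}$ ordered by $X\sqsubseteq Y$ iff ($X,Y$ are sets and $X\subseteq Y$) or $Y=\top$. View abstraction: the view states are $\mathit{State}^{\mathsf{v}}=\mathit{Loc}\times\{\top\}\cup\{\langle\ell,\langle s,h\rangle\rangle \mid \mathrm{dom}(h)=s(\mathit{Var}_p)\}$ (the view heap $h$ may point outside its domain, so need not be safe). The abstract domain is $\mathcal{A}^{\mathsf{v}}=(\mathcal{P}(\mathit{State}^{\mathsf{v}})\times\mathcal{P}(\mathit{Addr}\times\mathit{FldVal}))\cup\{\top\}$, ordered by componentwise subset inclusion with $\top$ as top element; it is a complete lattice. For a view heap $h$ and $H\subseteq\mathit{Addr}\times\mathit{FldVal}$ (the space invariant), the completion $H\triangleright h$ is the set of safe heaps $h'$ with $h'=h\uplus h''$ for some $h''\in\mathit{Heap}$ whose graph is contained in $H$. The concretization is $\gamma^{\mathsf{v}}(\Sigma,H)=\{\langle\ell,\langle s,h'\rangle\rangle \mid \langle\ell,\langle s,h\rangle\rangle\in\Sigma \wedge h'\in H\triangleright h\}$ and $\gamma^{\mathsf{v}}(\top)=\top$. The abstraction $\alpha^{\mathsf{v}}:\mathcal{C}\to\mathcal{A}^{\mathsf{v}}$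 is defined as $\alpha^{\mathsf{v}}(\Sigma)=$ the greatest lower bound (meet) in $\mathcal{A}^{\mathsf{v}}$ of the set $\{V\in\mathcal{A}^{\mathsf{v}} \mid \Sigma\sqsubseteq\gamma^{\mathsf{v}}(V)\}$. *)

theory Defs
  imports Main
begin

datatype 'a val = VAddr 'a | VInt int

(* FldVal = (Fld \<uplus> {free}) \<Rightarrow> Val ; None encodes the extra field 'free' *)
type_synonym ('f,'a) fldval = "'f option \<Rightarrow> 'a val"
type_synonym ('f,'a) heap = "'a \<rightharpoonup> ('f,'a) fldval"
type_synonym ('v,'a) stack = "'v \<Rightarrow> 'a val"

type_synonym ('l,'v,'f,'a) cstate = "'l \<times> ('v,'a) stack \<times> ('f,'a) heap"
(* view state: None in the second component encodes <l, top> *)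
type_synonym ('l,'v,'f,'a) vstate = "'l \<times> (('v,'a) stack \<times> ('f,'a) heap) option"

(* Var_p = Vp, Var_d = - Vp ;  Fld_p = Fp, Fld_d = - Fp *)

definition is_addr :: "'a val \<Rightarrow> bool" where
  "is_addr v \<longleftrightarrow> (\<exists>a. v = VAddr a)"

definition is_int :: "'a val \<Rightarrow> bool" where
  "is_int v \<longleftrightarrow> (\<exists>i. v = VInt i)"

definition addr_rng :: "('v,'a) stack \<Rightarrow> 'a set" where
  "addr_rng s = {a. VAddr a \<in> range s}"

definition safe_stack :: "'v set \<Rightarrow> ('v,'a) stack \<Rightarrow> bool" where
  "safe_stack Vp s \<longleftrightarrow> (\<forall>x. (x \<in> Vp \<longrightarrow> is_addr (s x)) \<and> (x \<notin> Vp \<longrightarrow> is_int (s x)))"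

definition safe_heap :: "'f set \<Rightarrow> ('f,'a) heap \<Rightarrow> bool" where
  "safe_heap Fp h \<longleftrightarrow> (\<forall>a \<in> dom h. \<forall>c. h a = Some c \<longrightarrow>
      (\<forall>f \<in> Fp. \<exists>b \<in> dom h. c (Some f) = VAddr b) \<and>
      (\<forall>f. f \<notin> Fp \<longrightarrow> is_int (c (Some f))) \<and> is_int (c None))"

definition States :: "'v set \<Rightarrow> 'f set \<Rightarrow> ('l,'v,'f,'a) cstate set" where
  "States Vp Fp = {(l, s, h). safe_stack Vp s \<and> safe_heap Fp h \<and> addr_rng s \<subseteq> dom h}"

definition ptr_img :: "'v set \<Rightarrow> ('v,'a) stack \<Rightarrow> 'a set" where
  "ptr_img Vp s = {a. VAddr a \<in> s ` Vp}"

definition VStates :: "'v set \<Rightarrow> ('l,'v,'f,'a) vstate set" where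
  "VStates Vp = {(l, None) | l. True} \<union>
     {(l, Some (s, h)) | l s h. safe_stack Vp s \<and> dom h = ptr_img Vp s}"

(* Concrete domain C = P(State) \<union> {top};  None encodes top *)
definition c_le :: "('l,'v,'f,'a) cstate set option \<Rightarrow> ('l,'v,'f,'a) cstate set option \<Rightarrow> bool" where
  "c_le X Y \<longleftrightarrow> (case Y of None \<Rightarrow> True
                   | Some B \<Rightarrow> (case X of None \<Rightarrow> False | Some A \<Rightarrow> A \<subseteq> B))"

definition CDom :: "'v set \<Rightarrow> 'f set \<Rightarrow> ('l,'v,'f,'a) cstate set option set" where
  "CDom Vp Fp = {None} \<union> Some ` Pow (States Vp Fp)"

(* Abstract domain A^v; None encodes top *)
type_synonym ('l,'v,'f,'a) aval = "(('l,'v,'f,'a) vstate set \<times> ('a \<times> ('f,'a) fldval) set) option"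

definition AvDom :: "'v set \<Rightarrow> ('l,'v,'f,'a) aval set" where
  "AvDom Vp = {None} \<union> Some ` (Pow (VStates Vp) \<times> UNIV)"

definition av_le :: "('l,'v,'f,'a) aval \<Rightarrow> ('l,'v,'f,'a) aval \<Rightarrow> bool" where
  "av_le X Y \<longleftrightarrow> (case Y of None \<Rightarrow> True
                    | Some (S2, H2) \<Rightarrow> (case X of None \<Rightarrow> False
                                       | Some (S1, H1) \<Rightarrow> S1 \<subseteq> S2 \<and> H1 \<subseteq> H2))"

definition av_meet :: "'v set \<Rightarrow> ('l,'v,'f,'a) aval set \<Rightarrow> ('l,'v,'f,'a) aval" where
  "av_meet Vp K = (THE V. V \<in> AvDom Vp \<and> (\<forall>W \<in> K. av_le V W) \<and>
      (\<forall>U \<in> AvDom Vp. (\<forall>W \<in> K. av_le U W) \<longrightarrow> av_le U V))"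

definition av_join :: "'v set \<Rightarrow> ('l,'v,'f,'a) aval set \<Rightarrow> ('l,'v,'f,'a) aval" where
  "av_join Vp K = (THE V. V \<in> AvDom Vp \<and> (\<forall>W \<in> K. av_le W V) \<and>
      (\<forall>U \<in> AvDom Vp. (\<forall>W \<in> K. av_le W U) \<longrightarrow> av_le V U))"

definition completion :: "'f set \<Rightarrow> ('a \<times> ('f,'a) fldval) set \<Rightarrow> ('f,'a) heap \<Rightarrow> ('f,'a) heap set" where
  "completion Fp H h = {h'. safe_heap Fp h' \<and>
      (\<exists>h''. dom h \<inter> dom h'' = {} \<and> h' = h ++ h'' \<and> Map.graph h'' \<subseteq> H)}"

definition gamma_v :: "'f set \<Rightarrow> ('l,'v,'f,'a) aval \<Rightarrow> ('l,'v,'f,'a) cstate set option" where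
  "gamma_v Fp V = (case V of None \<Rightarrow> None
     | Some (\<Sigma>, H) \<Rightarrow> Some {(l, s, h'). \<exists>h. (l, Some (s, h)) \<in> \<Sigma> \<and> h' \<in> completion Fp H h})"

definition alpha_v :: "'v set \<Rightarrow> 'f set \<Rightarrow> ('l,'v,'f,'a) cstate set option \<Rightarrow> ('l,'v,'f,'a) aval" where
  "alpha_v Vp Fp X = av_meet Vp {V \<in> AvDom Vp. c_le X (gamma_v Fp V)}"

end

theory Submission
  imports Defs
begin

text \<open>A concrete state \<open>(l, s, h)\<close> splits into its view, the part of \<open>h\<close> on the addresses
  held by the stack, and its residue, the graph of the rest of \<open>h\<close>.  A completion of a view
  heap agrees with \<open>h\<close> on the view's domain, which for a view state is exactly the stack's
  address range, so all remaining cells must lie in the space invariant.  Hence the views of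
  \<open>\<Sigma>\<close> together with the union of the residues form the least abstract element whose
  concretisation contains \<open>\<Sigma>\<close>, and this element is the componentwise union of the
  abstractions of the single states.\<close>

definition state_view :: "('l,'v,'f,'a) cstate \<Rightarrow> ('l,'v,'f,'a) vstate" where
  "state_view = (\<lambda>(l, s, h). (l, Some (s, h |` addr_rng s)))"

definition state_residue :: "('l,'v,'f,'a) cstate \<Rightarrow> ('a \<times> ('f,'a) fldval) set" where
  "state_residue = (\<lambda>(l, s, h). Map.graph (h |` (- addr_rng s)))"

lemma av_le_refl: "av_le X X"
  by (auto simp: av_le_def split: option.splits)

lemma av_le_antisym: "av_le X Y \<Longrightarrow> av_le Y X \<Longrightarrow> X = Y"
  by (auto simp: av_le_def split: option.splits prod.splits)

lemma av_join_eqI: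
  assumes "J \<in> AvDom Vp" "\<forall>W\<in>K. av_le W J"
    and "\<forall>U\<in>AvDom Vp. (\<forall>W\<in>K. av_le W U) \<longrightarrow> av_le J U"
  shows "av_join Vp K = J"
  unfolding av_join_def
proof (rule the_equality)
  fix V
  assume "V \<in> AvDom Vp \<and> (\<forall>W\<in>K. av_le W V) \<and>
      (\<forall>U\<in>AvDom Vp. (\<forall>W\<in>K. av_le W U) \<longrightarrow> av_le V U)"
  with assms show "V = J" by (blast intro: av_le_antisym)
qed (use assms in blast)

lemma av_meet_eqI:
  assumes "J \<in> AvDom Vp" "\<forall>W\<in>K. av_le J W"
    and "\<forall>U\<in>AvDom Vp. (\<forall>W\<in>K. av_le U W) \<longrightarrow> av_le U J"
  shows "av_meet Vp K = J"
  unfolding av_meet_def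
proof (rule the_equality)
  fix V
  assume "V \<in> AvDom Vp \<and> (\<forall>W\<in>K. av_le V W) \<and>
      (\<forall>U\<in>AvDom Vp. (\<forall>W\<in>K. av_le U W) \<longrightarrow> av_le U V)"
  with assms show "V = J" by (blast intro: av_le_antisym)
qed (use assms in blast)

lemma av_meet_least:
  assumes "J \<in> K" "K \<subseteq> AvDom Vp" "\<forall>W\<in>K. av_le J W"
  shows "av_meet Vp K = J"
  using assms by (intro av_meet_eqI) auto

lemma av_join_Some:
  assumes "P \<subseteq> Pow (VStates Vp) \<times> UNIV"
  shows "av_join Vp (Some ` P) = Some (\<Union> (fst ` P), \<Union> (snd ` P))"
proof (rule av_join_eqI)
  show "Some (\<Union> (fst ` P), \<Union> (snd ` P)) \<in> AvDom Vp"
    using assms unfolding AvDom_def by (intro UnI2 imageI) fastforce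
  show "\<forall>W\<in>Some ` P. av_le W (Some (\<Union> (fst ` P), \<Union> (snd ` P)))"
    by (auto simp: av_le_def)
  show "\<forall>U\<in>AvDom Vp. (\<forall>W\<in>Some ` P. av_le W U) \<longrightarrow> av_le (Some (\<Union> (fst ` P), \<Union> (snd ` P))) U"
    by (fastforce simp: av_le_def split: option.splits)
qed

lemma addr_rng_eq_ptr_img: "safe_stack Vp s \<Longrightarrow> addr_rng s = ptr_img Vp s"
  unfolding addr_rng_def ptr_img_def safe_stack_def is_int_def by force

lemma completion_iff_restrict:
  "h \<in> completion Fp H h0 \<longleftrightarrow>
     safe_heap Fp h \<and> h0 = h |` dom h0 \<and> Map.graph (h |` (- dom h0)) \<subseteq> H"
proof
  assume "h \<in> completion Fp H h0"
  then obtain h'' where "safe_heap Fp h" "dom h0 \<inter> dom h'' = {}" "h = h0 ++ h''"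
    and "Map.graph h'' \<subseteq> H"
    unfolding completion_def by blast
  moreover from \<open>dom h0 \<inter> dom h'' = {}\<close> \<open>h = h0 ++ h''\<close>
  have "h |` dom h0 = h0" "h |` (- dom h0) = h''"
    by (auto simp: restrict_map_def map_add_def fun_eq_iff split: option.splits)
  ultimately show "safe_heap Fp h \<and> h0 = h |` dom h0 \<and> Map.graph (h |` (- dom h0)) \<subseteq> H"
    by simp
next
  assume "safe_heap Fp h \<and> h0 = h |` dom h0 \<and> Map.graph (h |` (- dom h0)) \<subseteq> H"
  moreover have "h = (h |` dom h0) ++ (h |` (- dom h0))"
    by (auto simp: restrict_map_def map_add_def fun_eq_iff split: option.splits)
  ultimately show "h \<in> completion Fp H h0"
    unfolding completion_def by (intro CollectI conjI exI[of _ "h |` (- dom h0)"]) auto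
qed

lemma state_view_in_VStates:
  "\<sigma> \<in> States Vp Fp \<Longrightarrow> state_view \<sigma> \<in> VStates Vp"
  by (auto simp: state_view_def States_def VStates_def addr_rng_eq_ptr_img)

lemma mem_gamma_v_iff_view_residue:
  assumes "\<sigma> \<in> States Vp Fp" and "S \<subseteq> VStates Vp"
  shows "\<sigma> \<in> {(l, s, h'). \<exists>h. (l, Some (s, h)) \<in> S \<and> h' \<in> completion Fp H h}
    \<longleftrightarrow> state_view \<sigma> \<in> S \<and> state_residue \<sigma> \<subseteq> H"
proof -
  obtain l s h where \<sigma>: "\<sigma> = (l, s, h)" by (cases \<sigma>)
  with assms(1) have safe: "safe_stack Vp s" "safe_heap Fp h" "addr_rng s \<subseteq> dom h"
    unfolding States_def by auto
  have "h |` addr_rng s = h0 \<and> Map.graph (h |` (- addr_rng s)) \<subseteq> H"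
    if "(l, Some (s, h0)) \<in> S" "h \<in> completion Fp H h0" for h0
  proof -
    from that(1) assms(2) have "dom h0 = addr_rng s"
      using safe(1) by (auto simp: VStates_def addr_rng_eq_ptr_img)
    with that(2) show ?thesis by (simp add: completion_iff_restrict)
  qed
  moreover have "h \<in> completion Fp H (h |` addr_rng s)" if "Map.graph (h |` (- addr_rng s)) \<subseteq> H"
    using that safe(2) by (simp add: completion_iff_restrict Int_absorb1[OF safe(3)])
  ultimately show ?thesis
    unfolding \<sigma> state_view_def state_residue_def by auto
qed

lemma c_le_gamma_v_iff:
  assumes "\<Sigma> \<subseteq> States Vp Fp" and "V \<in> AvDom Vp"
  shows "c_le (Some \<Sigma>) (gamma_v Fp V)
    \<longleftrightarrow> av_le (Some (state_view ` \<Sigma>, \<Union> (state_residue ` \<Sigma>))) V"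
proof (cases V)
  case None
  then show ?thesis by (simp add: c_le_def gamma_v_def av_le_def)
next
  case (Some p)
  then obtain S H where V: "V = Some (S, H)" and views: "S \<subseteq> VStates Vp"
    using assms(2) by (cases p) (auto simp: AvDom_def)
  have "c_le (Some \<Sigma>) (gamma_v Fp V) \<longleftrightarrow>
      (\<forall>\<sigma>\<in>\<Sigma>. \<sigma> \<in> {(l, s, h'). \<exists>h. (l, Some (s, h)) \<in> S \<and> h' \<in> completion Fp H h})"
    by (simp add: V c_le_def gamma_v_def subset_eq[of \<Sigma>])
  also have "\<dots> \<longleftrightarrow> (\<forall>\<sigma>\<in>\<Sigma>. state_view \<sigma> \<in> S \<and> state_residue \<sigma> \<subseteq> H)"
    using assms(1) by (intro ball_cong refl mem_gamma_v_iff_view_residue[OF _ views]) auto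
  also have "\<dots> \<longleftrightarrow> av_le (Some (state_view ` \<Sigma>, \<Union> (state_residue ` \<Sigma>))) V"
    by (auto simp: V av_le_def)
  finally show ?thesis .
qed

lemma c_le_None_gamma_v_iff: "c_le None (gamma_v Fp V) \<longleftrightarrow> V = None"
  by (auto simp: c_le_def gamma_v_def split: option.splits)

theorem lemma4p2:
  fixes Vp :: "'v set" and Fp :: "'f set"
    and \<Sigma> :: "('l::finite, 'v, 'f, 'a) cstate set"
  assumes "\<Sigma> \<subseteq> States Vp Fp"
  shows "alpha_v Vp Fp (Some \<Sigma>) =
           av_join Vp {Some ({(l, Some (s, h |` addr_rng s))}, Map.graph (h |` (- addr_rng s)))
                        | l s h. (l, s, h) \<in> \<Sigma>}
         \<and> alpha_v Vp Fp (None :: ('l, 'v, 'f, 'a) cstate set option) = None"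
proof
  let ?A = "Some (state_view ` \<Sigma>, \<Union> (state_residue ` \<Sigma>))"
  let ?P = "(\<lambda>\<sigma>. ({state_view \<sigma>}, state_residue \<sigma>)) ` \<Sigma>"
  have views: "state_view ` \<Sigma> \<subseteq> VStates Vp"
    using assms state_view_in_VStates by blast
  then have "?A \<in> AvDom Vp" by (simp add: AvDom_def)
  then have "alpha_v Vp Fp (Some \<Sigma>) = ?A"
    unfolding alpha_v_def using assms
    by (intro av_meet_least) (auto simp: c_le_gamma_v_iff av_le_refl)
  moreover have "av_join Vp (Some ` ?P) = ?A"
    using views by (subst av_join_Some) (auto simp: image_image)
  moreover have "Some ` ?P = {Some ({(l, Some (s, h |` addr_rng s))}, Map.graph (h |` (- addr_rng s)))
                        | l s h. (l, s, h) \<in> \<Sigma>}"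
    by (force simp: state_view_def state_residue_def)
  ultimately show "alpha_v Vp Fp (Some \<Sigma>) =
           av_join Vp {Some ({(l, Some (s, h |` addr_rng s))}, Map.graph (h |` (- addr_rng s)))
                        | l s h. (l, s, h) \<in> \<Sigma>}"
    by simp
next
  show "alpha_v Vp Fp (None :: ('l, 'v, 'f, 'a) cstate set option) = None"
    unfolding alpha_v_def c_le_None_gamma_v_iff
    by (rule av_meet_least) (auto simp: AvDom_def av_le_def)
qed

end
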